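(* Let $\mathcal H$ be a separable complex Hilbert space, $A\in L(\mathcal H)^+$, $B\in L(\mathcal H)$ with closed range, and $\mathcal M$ a closed subspace such that $B(\mathcal M)$ is closed. Then $B$ admits an $A$-inverse restricted to $\mathcal M$ if and only if the pair $(A,B(\mathcal M))$ is compatible.
   Context: $\|z\|_A=\langle Az,z\rangle^{1/2}$. $G\in L(\mathcal H)$ is an $A$-inverse of $B$ restricted to $\mathcal M$ if $R(G)\subseteq\mathcal M$ and for each $y\in\mathcal H$, $\|y-BGy\|_A\le\|y-Bx\|_A$ for all $x\in\mathcal M$. $(A,\mathcal S)$ is compatible if there exists $Q\in L(\mathcal H)$ with $Q^2=Q$, $R(Q)=\mathcal S$, $AQ=Q^*A$. *)

theory Defs
  imports "HOL-Analysis.Analysis" "HOL-Library.Complex_Order"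
begin

class complex_vector_normed = real_normed_vector +
  fixes scaleC :: "complex \<Rightarrow> 'a \<Rightarrow> 'a"  (infixr \<open>*\<^sub>C\<close> 75)
  assumes scaleC_add_right: "a *\<^sub>C (x + y) = a *\<^sub>C x + a *\<^sub>C y"
    and scaleC_add_left: "(a + b) *\<^sub>C x = a *\<^sub>C x + b *\<^sub>C x"
    and scaleC_scaleC: "a *\<^sub>C (b *\<^sub>C x) = (a * b) *\<^sub>C x"
    and scaleC_one: "1 *\<^sub>C x = x"
    and scaleR_scaleC: "scaleR r x = complex_of_real r *\<^sub>C x"

class complex_inner_space = complex_vector_normed +
  fixes cinner :: "'a \<Rightarrow> 'a \<Rightarrow> complex"
  assumes cinner_conj: "cinner x y = cnj (cinner y x)"
    and cinner_add_left: "cinner (x + y) z = cinner x z + cinner y z"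
    and cinner_scaleC_left: "cinner (a *\<^sub>C x) y = a * cinner x y"
    and cinner_ge_zero: "0 \<le> cinner x x"
    and cinner_eq_zero_iff: "cinner x x = 0 \<longleftrightarrow> x = 0"
    and norm_eq_sqrt_cinner: "norm x = sqrt (Re (cinner x x))"

class chilbert_space = complex_inner_space + complete_space

definition separable_space :: "'a::topological_space itself \<Rightarrow> bool" where
  "separable_space _ \<longleftrightarrow> (\<exists>D::'a set. countable D \<and> closure D = UNIV)"

definition bounded_clinear :: "('a::complex_vector_normed \<Rightarrow> 'b::complex_vector_normed) \<Rightarrow> bool" where
  "bounded_clinear T \<longleftrightarrow>
     (\<forall>x y. T (x + y) = T x + T y) \<and> (\<forall>a x. T (a *\<^sub>C x) = a *\<^sub>C T x) \<and>
     (\<exists>K. \<forall>x. norm (T x) \<le> norm x * K)"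

definition closed_csubspace :: "'a::complex_vector_normed set \<Rightarrow> bool" where
  "closed_csubspace M \<longleftrightarrow> 0 \<in> M \<and> (\<forall>x\<in>M. \<forall>y\<in>M. x + y \<in> M) \<and>
     (\<forall>a. \<forall>x\<in>M. a *\<^sub>C x \<in> M) \<and> closed M"

definition adj :: "('a::complex_inner_space \<Rightarrow> 'a) \<Rightarrow> ('a \<Rightarrow> 'a)" where
  "adj T = (THE S. \<forall>x y. cinner (S x) y = cinner x (T y))"

definition positive_op :: "('a::complex_inner_space \<Rightarrow> 'a) \<Rightarrow> bool" where
  "positive_op A \<longleftrightarrow> bounded_clinear A \<and> (\<forall>x. 0 \<le> cinner (A x) x)"

definition normA :: "('a::complex_inner_space \<Rightarrow> 'a) \<Rightarrow> 'a \<Rightarrow> real" where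
  "normA A z = sqrt (Re (cinner (A z) z))"

definition is_A_inverse_restricted ::
  "('a::complex_inner_space \<Rightarrow> 'a) \<Rightarrow> ('a \<Rightarrow> 'a) \<Rightarrow> 'a set \<Rightarrow> ('a \<Rightarrow> 'a) \<Rightarrow> bool" where
  "is_A_inverse_restricted A B M G \<longleftrightarrow> bounded_clinear G \<and> range G \<subseteq> M \<and>
     (\<forall>y. \<forall>x\<in>M. normA A (y - B (G y)) \<le> normA A (y - B x))"

definition compatible :: "('a::complex_inner_space \<Rightarrow> 'a) \<Rightarrow> 'a set \<Rightarrow> bool" where
  "compatible A S \<longleftrightarrow> (\<exists>Q. bounded_clinear Q \<and> Q \<circ> Q = Q \<and> range Q = S \<and>
     A \<circ> Q = adj Q \<circ> A)"

end

theory Submission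
  imports Defs
begin

text \<open>
  Write \<open>S = B(M)\<close>, a closed subspace. If \<open>G\<close> is an \<open>A\<close>-inverse, the first-order condition
  for the minimum of the \<open>A\<close>-seminorm says that every residual \<open>y - BGy\<close> is \<open>A\<close>-orthogonal
  to \<open>S\<close>. Hence \<open>P = BG\<close> satisfies \<open>AP = A\<close> on \<open>S\<close>, and \<open>Q = E + P(I - E)\<close>, with \<open>E\<close> the
  orthogonal projection onto \<open>S\<close>, is an idempotent onto \<open>S\<close> with \<open>AQ = AP = Q\<^sup>*A\<close>.
  Conversely, if \<open>Q\<close> is an idempotent onto \<open>S\<close> with \<open>AQ = Q\<^sup>*A\<close>, the residual \<open>y - Qy\<close> is
  \<open>A\<close>-orthogonal to \<open>S\<close>, so \<open>Qy\<close> is an \<open>A\<close>-nearest point of \<open>S\<close> to \<open>y\<close>; composing \<open>Q\<close> with a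
  bounded right inverse \<open>S \<rightarrow> M\<close> of \<open>B\<close>, which exists by the open mapping theorem, gives the
  \<open>A\<close>-inverse.
\<close>

lemma scaleC_zero_left [simp]: "(0::complex) *\<^sub>C x = 0"
proof -
  have "0 *\<^sub>C x = 0 *\<^sub>C x + 0 *\<^sub>C x"
    by (metis add_0 scaleC_add_left)
  then show ?thesis by simp
qed

lemma scaleC_zero_right [simp]: "a *\<^sub>C (0::'a::complex_vector_normed) = 0"
proof -
  have "a *\<^sub>C 0 = a *\<^sub>C (0::'a) + a *\<^sub>C 0"
    by (metis add_0 scaleC_add_right)
  then show ?thesis by simp
qed

lemma scaleC_diff_right: "a *\<^sub>C (x - y) = a *\<^sub>C x - a *\<^sub>C (y::'a::complex_vector_normed)"
  by (metis diff_add_cancel eq_diff_eq scaleC_add_right)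

lemma cinner_add_right: "cinner x (y + z) = cinner x y + cinner x (z::'a::complex_inner_space)"
  by (metis cinner_add_left cinner_conj complex_cnj_add)

lemma cinner_scaleC_right: "cinner x (a *\<^sub>C y) = cnj a * cinner x (y::'a::complex_inner_space)"
  by (metis cinner_conj cinner_scaleC_left complex_cnj_mult)

lemma cinner_zero_left [simp]: "cinner 0 (y::'a::complex_inner_space) = 0"
  by (metis cinner_scaleC_left mult_zero_left scaleC_zero_left)

lemma cinner_zero_right [simp]: "cinner x (0::'a::complex_inner_space) = 0"
  by (metis cinner_conj cinner_zero_left complex_cnj_zero)

lemma cinner_diff_left: "cinner (x - y) (z::'a::complex_inner_space) = cinner x z - cinner y z"
  by (metis cinner_add_left diff_add_cancel eq_diff_eq)

lemma cinner_diff_right: "cinner x (y - z::'a::complex_inner_space) = cinner x y - cinner x z"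
  by (metis cinner_add_right diff_add_cancel eq_diff_eq)

lemma Re_cinner_self: "Re (cinner x (x::'a::complex_inner_space)) = (norm x)\<^sup>2"
  using cinner_ge_zero[of x] by (simp add: norm_eq_sqrt_cinner less_eq_complex_def)

lemma cinner_self: "cinner x (x::'a::complex_inner_space) = complex_of_real ((norm x)\<^sup>2)"
  using cinner_ge_zero[of x] by (simp add: complex_eq_iff Re_cinner_self less_eq_complex_def)

lemma norm_scaleC: "norm (a *\<^sub>C (x::'a::complex_inner_space)) = cmod a * norm x"
proof -
  have "cinner (a *\<^sub>C x) (a *\<^sub>C x) = (a * cnj a) * cinner x x"
    by (simp add: cinner_scaleC_left cinner_scaleC_right)
  also have "a * cnj a = complex_of_real ((cmod a)\<^sup>2)"
    by (metis complex_norm_square of_real_power)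
  finally have "(norm (a *\<^sub>C x))\<^sup>2 = (cmod a * norm x)\<^sup>2"
    by (metis Re_cinner_self Re_complex_of_real cinner_self of_real_mult power_mult_distrib)
  then show ?thesis by (simp add: power2_eq_iff_nonneg)
qed

lemma power2_norm_add:
  "(norm (x + y::'a::complex_inner_space))\<^sup>2 = (norm x)\<^sup>2 + (norm y)\<^sup>2 + 2 * Re (cinner x y)"
proof -
  have "Re (cinner y x) = Re (cinner x y)"
    by (metis cinner_conj complex_cnj_cnj cnj.simps(1))
  then show ?thesis
    by (simp add: Re_cinner_self[symmetric] cinner_add_left cinner_add_right)
qed

lemma power2_norm_diff:
  "(norm (x - y::'a::complex_inner_space))\<^sup>2 = (norm x)\<^sup>2 + (norm y)\<^sup>2 - 2 * Re (cinner x y)"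
  using power2_norm_add[of "x - y" y] by (simp add: cinner_diff_left Re_cinner_self)

lemma cinner_left_ext: "(\<And>y. cinner x y = cinner z y) \<Longrightarrow> x = (z::'a::complex_inner_space)"
  by (metis cinner_diff_left cinner_eq_zero_iff diff_self eq_iff_diff_eq_0)

lemma norm_cinner_le: "cmod (cinner x (y::'a::complex_inner_space)) \<le> norm x * norm y"
proof (cases "y = 0")
  case True
  then show ?thesis by simp
next
  case False
  define n where "n = (norm y)\<^sup>2"
  define s where "s = cinner x y"
  define c where "c = s / complex_of_real n"
  have n: "n > 0"
    using False by (simp add: n_def)
  have "Re (cnj c * s) = (cmod s)\<^sup>2 / n"
  proof -
    have "cnj c * s = (cnj s * s) / complex_of_real n"
      by (simp add: c_def)
    also have "cnj s * s = complex_of_real ((cmod s)\<^sup>2)"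
      by (metis complex_norm_square mult.commute of_real_power)
    finally show ?thesis by (simp add: Re_divide_of_real)
  qed
  moreover have "(cmod c)\<^sup>2 * n = (cmod s)\<^sup>2 / n"
    using n by (simp add: c_def norm_divide power_divide power2_eq_square)
  moreover have "(norm (x - c *\<^sub>C y))\<^sup>2 = (norm x)\<^sup>2 + (cmod c)\<^sup>2 * n - 2 * Re (cnj c * s)"
    by (simp add: power2_norm_diff norm_scaleC cinner_scaleC_right power_mult_distrib n_def s_def)
  ultimately have "(cmod s)\<^sup>2 / n \<le> (norm x)\<^sup>2"
    by (smt (verit) zero_le_power2)
  then have "(cmod s)\<^sup>2 \<le> (norm x * norm y)\<^sup>2"
    using n by (simp add: divide_le_eq n_def power_mult_distrib)
  then show ?thesis
    unfolding s_def by (meson mult_nonneg_nonneg norm_ge_zero power2_le_imp_le)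
qed

lemma bounded_clinear_iff:
  "bounded_clinear T \<longleftrightarrow> bounded_linear T \<and> (\<forall>a x. T (a *\<^sub>C x) = a *\<^sub>C T x)"
proof
  assume T: "bounded_clinear T"
  then obtain K where "\<And>x. norm (T x) \<le> norm x * K"
    unfolding bounded_clinear_def by blast
  with T have "bounded_linear T"
    by (intro bounded_linear_intro[where K = K]) (auto simp: bounded_clinear_def scaleR_scaleC)
  with T show "bounded_linear T \<and> (\<forall>a x. T (a *\<^sub>C x) = a *\<^sub>C T x)"
    by (simp add: bounded_clinear_def)
next
  assume T: "bounded_linear T \<and> (\<forall>a x. T (a *\<^sub>C x) = a *\<^sub>C T x)"
  then interpret T: bounded_linear T by blast
  show "bounded_clinear T"
    using T T.add T.bounded by (simp add: bounded_clinear_def)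
qed

lemma bounded_clinear_imp_bounded_linear: "bounded_clinear T \<Longrightarrow> bounded_linear T"
  by (simp add: bounded_clinear_iff)

lemma bounded_clinear_scaleC: "bounded_clinear T \<Longrightarrow> T (a *\<^sub>C x) = a *\<^sub>C T x"
  by (simp add: bounded_clinear_def)

lemma bounded_clinear_ident: "bounded_clinear (\<lambda>x. x)"
  by (simp add: bounded_clinear_iff)

lemma bounded_clinear_compose:
  "bounded_clinear S \<Longrightarrow> bounded_clinear T \<Longrightarrow> bounded_clinear (\<lambda>x. S (T x))"
  by (simp add: bounded_clinear_iff bounded_linear_compose)

lemma bounded_clinear_add:
  "bounded_clinear S \<Longrightarrow> bounded_clinear T \<Longrightarrow> bounded_clinear (\<lambda>x. S x + T x)"
  by (simp add: bounded_clinear_iff bounded_linear_add scaleC_add_right)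

lemma bounded_clinear_sub:
  "bounded_clinear S \<Longrightarrow> bounded_clinear T \<Longrightarrow> bounded_clinear (\<lambda>x. S x - T x)"
  by (simp add: bounded_clinear_iff bounded_linear_sub scaleC_diff_right)

lemma closed_csubspace_iff:
  "closed_csubspace M \<longleftrightarrow> subspace M \<and> (\<forall>a. \<forall>x\<in>M. a *\<^sub>C x \<in> M) \<and> closed M"
  by (auto simp: closed_csubspace_def subspace_def scaleR_scaleC)

lemma closed_csubspace_imp_subspace: "closed_csubspace M \<Longrightarrow> subspace M"
  by (simp add: closed_csubspace_iff)

lemma closed_csubspace_scaleC: "closed_csubspace M \<Longrightarrow> x \<in> M \<Longrightarrow> a *\<^sub>C x \<in> M"
  by (simp add: closed_csubspace_def)

lemma closed_csubspace_image:
  assumes B: "bounded_clinear B" and M: "closed_csubspace M" and "closed (B ` M)"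
  shows "closed_csubspace (B ` M)"
proof -
  have "subspace (B ` M)"
    using B M by (simp add: bounded_clinear_iff closed_csubspace_iff bounded_linear.linear
        real_vector.linear_subspace_image)
  moreover have "a *\<^sub>C x \<in> B ` M" if "x \<in> B ` M" for a x
    using that B M by (auto simp flip: bounded_clinear_scaleC intro: closed_csubspace_scaleC)
  ultimately show ?thesis
    using assms(3) by (simp add: closed_csubspace_iff)
qed

lemma closed_csubspace_Int_kernel:
  assumes B: "bounded_clinear B" and M: "closed_csubspace M"
  shows "closed_csubspace (M \<inter> B -` {0})"
proof -
  interpret B: bounded_linear B
    using B by (rule bounded_clinear_imp_bounded_linear)
  have "closed (B -` {0})"
    by (intro continuous_closed_vimage) (auto intro: linear_continuous_at B.bounded_linear)
  then show ?thesis
    using M by (auto simp: closed_csubspace_def B.add bounded_clinear_scaleC[OF B])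
qed

lemma positive_op_imp_bounded_clinear: "positive_op A \<Longrightarrow> bounded_clinear A"
  by (simp add: positive_op_def)

lemma positive_op_Re_nonneg: "positive_op A \<Longrightarrow> 0 \<le> Re (cinner (A u) u)"
  by (simp add: positive_op_def less_eq_complex_def)

lemma positive_op_ident: "positive_op (\<lambda>x. x)"
  by (simp add: positive_op_def bounded_clinear_ident cinner_ge_zero)

lemma positive_op_self_adjoint:
  assumes "positive_op A"
  shows "cinner (A x) y = cinner x (A y)"
proof -
  interpret A: bounded_linear A
    using assms by (simp add: positive_op_def bounded_clinear_imp_bounded_linear)
  have real: "Im (cinner (A z) z) = 0" for z
    using assms by (simp add: positive_op_def less_eq_complex_def)
  define h where "h u v = cinner (A u) v" for u v
  have "h (x + y) (x + y) = h x x + h y y + h x y + h y x"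
    by (simp add: h_def A.add cinner_add_left cinner_add_right)
  then have "Im (h x y + h y x) = 0"
    using real[of "x + y"] real[of x] real[of y] by (simp add: h_def)
  moreover have "h (x + \<i> *\<^sub>C y) (x + \<i> *\<^sub>C y) = h x x + h y y - \<i> * h x y + \<i> * h y x"
    using assms by (simp add: h_def A.add positive_op_def bounded_clinear_scaleC cinner_add_left
        cinner_add_right cinner_scaleC_left cinner_scaleC_right algebra_simps)
  then have "Im (- \<i> * h x y + \<i> * h y x) = 0"
    using real[of "x + \<i> *\<^sub>C y"] real[of x] real[of y] by (simp add: h_def)
  ultimately have "h y x = cnj (h x y)"
    by (simp add: complex_eq_iff)
  then show ?thesis
    unfolding h_def by (metis cinner_conj)
qed

lemma positive_op_quadratic_expand:
  assumes "positive_op A"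
  shows "Re (cinner (A (r - \<tau> *\<^sub>C t)) (r - \<tau> *\<^sub>C t)) =
    Re (cinner (A r) r) - 2 * Re (cnj \<tau> * cinner (A r) t) + (cmod \<tau>)\<^sup>2 * Re (cinner (A t) t)"
proof -
  interpret A: bounded_linear A
    using assms by (simp add: positive_op_def bounded_clinear_imp_bounded_linear)
  have "cinner (A t) r = cnj (cinner (A r) t)"
    using positive_op_self_adjoint[OF assms] cinner_conj by metis
  moreover have "\<tau> * cnj \<tau> = complex_of_real ((cmod \<tau>)\<^sup>2)"
    by (metis complex_norm_square)
  ultimately have "cinner (A (r - \<tau> *\<^sub>C t)) (r - \<tau> *\<^sub>C t) =
      cinner (A r) r - cnj \<tau> * cinner (A r) t - \<tau> * cnj (cinner (A r) t)
      + complex_of_real ((cmod \<tau>)\<^sup>2) * cinner (A t) t"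
    using assms by (simp add: A.diff positive_op_def bounded_clinear_scaleC cinner_diff_left
        cinner_diff_right cinner_scaleC_left cinner_scaleC_right algebra_simps)
  then show ?thesis by simp
qed

lemma linear_le_quadratic_imp_zero:
  assumes "\<And>\<tau>::complex. 2 * Re (cnj \<tau> * c) \<le> (cmod \<tau>)\<^sup>2 * q"
  shows "c = 0"
proof (rule ccontr)
  assume "c \<noteq> 0"
  then have c: "(cmod c)\<^sup>2 > 0" by simp
  \<comment> \<open>test with \<open>\<tau> = e c\<close> for \<open>e\<close> so small that \<open>e q < 1\<close>\<close>
  define e where "e = 1 / (\<bar>q\<bar> + 1)"
  have e: "e > 0"
    by (simp add: e_def add_pos_nonneg)
  have "cnj (complex_of_real e * c) * c = complex_of_real e * (cnj c * c)"
    by simp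
  also have "cnj c * c = complex_of_real ((cmod c)\<^sup>2)"
    by (metis complex_norm_square mult.commute)
  finally have "Re (cnj (complex_of_real e * c) * c) = e * (cmod c)\<^sup>2"
    by (metis Re_complex_of_real of_real_mult)
  moreover have "(cmod (complex_of_real e * c))\<^sup>2 = e\<^sup>2 * (cmod c)\<^sup>2"
    using e by (simp add: norm_mult power_mult_distrib)
  ultimately have "(2 * e) * (cmod c)\<^sup>2 \<le> (e\<^sup>2 * q) * (cmod c)\<^sup>2"
    using assms[of "complex_of_real e * c"] by (simp add: algebra_simps)
  then have "2 * e \<le> e\<^sup>2 * q"
    using c by simp
  then have "2 \<le> e * q"
    using e by (simp add: power2_eq_square mult.assoc)
  moreover have "e * q < 1"
    using e unfolding e_def by (simp add: field_simps abs_if)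
  ultimately show False by simp
qed

lemma positive_op_minimizer_orthogonal:
  assumes "positive_op A"
    and "\<And>\<tau>. Re (cinner (A r) r) \<le> Re (cinner (A (r - \<tau> *\<^sub>C t)) (r - \<tau> *\<^sub>C t))"
  shows "cinner (A r) t = 0"
proof (rule linear_le_quadratic_imp_zero[where q = "Re (cinner (A t) t)"])
  show "2 * Re (cnj \<tau> * cinner (A r) t) \<le> (cmod \<tau>)\<^sup>2 * Re (cinner (A t) t)" for \<tau>
    using assms(2)[of \<tau>] positive_op_quadratic_expand[OF assms(1), of r \<tau> t] by simp
qed

lemma positive_op_form_eq_zero_imp_zero:
  assumes "positive_op A" and "Re (cinner (A u) u) = 0"
  shows "A u = 0"
proof -
  have "cinner (A u) w = 0" for w
    by (rule positive_op_minimizer_orthogonal) (use assms positive_op_Re_nonneg in auto)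
  then show ?thesis
    using cinner_eq_zero_iff by blast
qed

lemma normA_le_iff: "normA A u \<le> normA A v \<longleftrightarrow> Re (cinner (A u) u) \<le> Re (cinner (A v) v)"
  by (simp add: normA_def)

lemma normA_le_of_orthogonal:
  assumes "positive_op A" and "cinner (A r) w = 0"
  shows "normA A r \<le> normA A (r - w)"
  using positive_op_quadratic_expand[OF assms(1), of r 1 w] positive_op_Re_nonneg[OF assms(1), of w]
  by (simp add: normA_le_iff assms(2) scaleC_one)

section \<open>Orthogonal projections\<close>

lemma Cauchy_minimizing_sequence:
  fixes x :: "'a::complex_inner_space"
  assumes K: "convex K" and k: "\<And>n. k n \<in> K"
    and d: "0 \<le> d" "\<And>z. z \<in> K \<Longrightarrow> d \<le> norm (x - z)"
    and min: "\<And>n. (norm (x - k n))\<^sup>2 \<le> d\<^sup>2 + 1 / real (Suc n)"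
  shows "Cauchy k"
proof -
  have est: "(norm (k m - k n))\<^sup>2 \<le> 2 / real (Suc n) + 2 / real (Suc m)" for m n
  proof -
    \<comment> \<open>parallelogram law with the midpoint of \<open>k m\<close> and \<open>k n\<close>, which lies in \<open>K\<close>\<close>
    define z where "z = (1/2) *\<^sub>R k n + (1/2) *\<^sub>R k m"
    have "z \<in> K"
      unfolding z_def by (rule convexD[OF K k k]) auto
    then have "d\<^sup>2 \<le> (norm (x - z))\<^sup>2"
      using d by (simp add: power_mono)
    moreover have "(x - k n) + (x - k m) = 2 *\<^sub>R (x - z)"
      by (simp add: z_def algebra_simps scaleR_2)
    then have "(norm ((x - k n) + (x - k m)))\<^sup>2 = 4 * (norm (x - z))\<^sup>2"
      by (simp add: power_mult_distrib)
    moreover have "(norm ((x - k n) + (x - k m)))\<^sup>2 + (norm (k m - k n))\<^sup>2 =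
        2 * (norm (x - k n))\<^sup>2 + 2 * (norm (x - k m))\<^sup>2"
      using power2_norm_add[of "x - k n" "x - k m"] power2_norm_diff[of "x - k n" "x - k m"]
      by (simp add: norm_minus_commute)
    ultimately show ?thesis
      using min[of n] min[of m] by linarith
  qed
  show ?thesis
    unfolding Cauchy_def
  proof (intro allI impI)
    fix e :: real
    assume e: "e > 0"
    obtain N where N: "inverse (real (Suc N)) < e\<^sup>2 / 4"
      using reals_Archimedean[of "e\<^sup>2 / 4"] e by auto
    have "dist (k m) (k n) < e" if "N \<le> m" "N \<le> n" for m n
    proof -
      have "2 / real (Suc n) \<le> 2 / real (Suc N)" "2 / real (Suc m) \<le> 2 / real (Suc N)"
        using that by (simp_all add: frac_le)
      moreover have "4 / real (Suc N) < e\<^sup>2"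
        using N by (simp add: field_simps)
      ultimately have "(norm (k m - k n))\<^sup>2 < e\<^sup>2"
        using est[of m n] by linarith
      then show ?thesis
        using e by (simp add: dist_norm power_less_imp_less_base)
    qed
    then show "\<exists>M. \<forall>m\<ge>M. \<forall>n\<ge>M. dist (k m) (k n) < e" by blast
  qed
qed

lemma closed_csubspace_nearest_point:
  fixes x :: "'a::chilbert_space"
  assumes K: "closed_csubspace K"
  shows "\<exists>p\<in>K. \<forall>k\<in>K. norm (x - p) \<le> norm (x - k)"
proof -
  define D where "D = (\<lambda>k. norm (x - k)) ` K"
  define d where "d = Inf D"
  have "D \<noteq> {}"
    using K by (auto simp: D_def closed_csubspace_def)
  have "bdd_below D"
    by (auto simp: D_def intro!: bdd_belowI[of _ 0])
  have d_le: "d \<le> norm (x - k)" if "k \<in> K" for k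
    unfolding d_def by (rule cInf_lower) (use that \<open>bdd_below D\<close> in \<open>auto simp: D_def\<close>)
  have "d \<ge> 0"
    unfolding d_def using \<open>D \<noteq> {}\<close> by (intro cInf_greatest) (auto simp: D_def)
  have "\<exists>k\<in>K. (norm (x - k))\<^sup>2 \<le> d\<^sup>2 + 1 / real (Suc n)" for n
  proof -
    have "d < sqrt (d\<^sup>2 + 1 / real (Suc n))"
      using \<open>d \<ge> 0\<close> by (metis abs_of_nonneg less_add_same_cancel1 of_nat_0_less_iff real_sqrt_abs
          real_sqrt_less_mono zero_less_Suc zero_less_divide_1_iff)
    then obtain z where "z \<in> D" "z < sqrt (d\<^sup>2 + 1 / real (Suc n))"
      using cInf_lessD[OF \<open>D \<noteq> {}\<close>] unfolding d_def by blast
    then obtain k where k: "k \<in> K" "norm (x - k) < sqrt (d\<^sup>2 + 1 / real (Suc n))"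
      by (auto simp: D_def)
    have "(norm (x - k))\<^sup>2 < (sqrt (d\<^sup>2 + 1 / real (Suc n)))\<^sup>2"
      using k(2) by (intro power_strict_mono) auto
    then show ?thesis
      using k(1) by (intro bexI[of _ k]) auto
  qed
  then obtain k where k: "\<And>n. k n \<in> K" "\<And>n. (norm (x - k n))\<^sup>2 \<le> d\<^sup>2 + 1 / real (Suc n)"
    by metis
  have "convex K"
    using K by (simp add: closed_csubspace_imp_subspace subspace_imp_convex)
  then have "Cauchy k"
    using k(1) \<open>d \<ge> 0\<close> d_le k(2) by (rule Cauchy_minimizing_sequence)
  then obtain p where p: "k \<longlonglongrightarrow> p"
    using Cauchy_convergent_iff convergent_def by blast
  have "p \<in> K"
    using K k(1) p closed_sequentially[of K k p] by (simp add: closed_csubspace_def)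
  have "(\<lambda>n. (norm (x - k n))\<^sup>2) \<longlonglongrightarrow> (norm (x - p))\<^sup>2"
    by (intro tendsto_intros p)
  moreover have "(\<lambda>n. d\<^sup>2 + 1 / real (Suc n)) \<longlonglongrightarrow> d\<^sup>2 + 0"
    by (intro tendsto_intros LIMSEQ_Suc[OF lim_inverse_n'])
  ultimately have "(norm (x - p))\<^sup>2 \<le> d\<^sup>2 + 0"
    by (rule LIMSEQ_le) (use k(2) in blast)
  then have "norm (x - p) \<le> d"
    using \<open>d \<ge> 0\<close> power2_le_imp_le[of "norm (x - p)" d] by simp
  then show ?thesis
    using \<open>p \<in> K\<close> d_le by (meson order_trans)
qed

lemma closed_csubspace_orthogonal_decomposition:
  fixes x :: "'a::chilbert_space"
  assumes K: "closed_csubspace K"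
  shows "\<exists>p\<in>K. \<forall>k\<in>K. cinner (x - p) k = 0"
proof -
  obtain p where p: "p \<in> K" "\<And>k. k \<in> K \<Longrightarrow> norm (x - p) \<le> norm (x - k)"
    using closed_csubspace_nearest_point[OF K] by blast
  have "cinner (x - p) k = 0" if "k \<in> K" for k
  proof (rule positive_op_minimizer_orthogonal[OF positive_op_ident])
    fix \<tau>
    have "p + \<tau> *\<^sub>C k \<in> K"
      using K p(1) that by (simp add: closed_csubspace_def)
    then have "(norm (x - p))\<^sup>2 \<le> (norm (x - p - \<tau> *\<^sub>C k))\<^sup>2"
      using p(2) by (simp add: power_mono diff_diff_eq)
    then show "Re (cinner (x - p) (x - p)) \<le> Re (cinner (x - p - \<tau> *\<^sub>C k) (x - p - \<tau> *\<^sub>C k))"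
      by (simp add: Re_cinner_self)
  qed
  then show ?thesis
    using p(1) by blast
qed

definition proj :: "'a::chilbert_space set \<Rightarrow> 'a \<Rightarrow> 'a" where
  "proj K x = (SOME p. p \<in> K \<and> (\<forall>k\<in>K. cinner (x - p) k = 0))"

lemma
  assumes "closed_csubspace K"
  shows proj_in: "proj K x \<in> K"
    and proj_orthogonal: "k \<in> K \<Longrightarrow> cinner (x - proj K x) k = 0"
  using someI_ex[OF closed_csubspace_orthogonal_decomposition[OF assms, of x, unfolded Bex_def]]
  unfolding proj_def by auto

lemma proj_unique:
  assumes K: "closed_csubspace K" and "p \<in> K" and "\<And>k. k \<in> K \<Longrightarrow> cinner (x - p) k = 0"
  shows "proj K x = p"
proof -
  have d: "proj K x - p \<in> K"
    using K assms(2) proj_in[OF K] by (simp add: closed_csubspace_imp_subspace subspace_diff)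
  have "cinner (proj K x - p) (proj K x - p) =
      cinner (x - p) (proj K x - p) - cinner (x - proj K x) (proj K x - p)"
    by (simp add: cinner_diff_left)
  also have "\<dots> = 0"
    using assms(3)[OF d] proj_orthogonal[OF K d] by simp
  finally have "proj K x - p = 0"
    by (simp add: cinner_eq_zero_iff)
  then show ?thesis by simp
qed

lemma proj_fixpoint: "closed_csubspace K \<Longrightarrow> k \<in> K \<Longrightarrow> proj K k = k"
  by (rule proj_unique) auto

lemma
  assumes "closed_csubspace K"
  shows norm_proj_le: "norm (proj K x) \<le> norm x"
    and norm_diff_proj_le: "norm (x - proj K x) \<le> norm x"
proof -
  have "cinner (x - proj K x) (proj K x) = 0"
    by (intro proj_orthogonal proj_in assms)
  then have "(norm x)\<^sup>2 = (norm (x - proj K x))\<^sup>2 + (norm (proj K x))\<^sup>2"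
    using power2_norm_add[of "x - proj K x" "proj K x"] by simp
  then have "(norm (proj K x))\<^sup>2 \<le> (norm x)\<^sup>2" "(norm (x - proj K x))\<^sup>2 \<le> (norm x)\<^sup>2"
    by simp_all
  then show "norm (proj K x) \<le> norm x" "norm (x - proj K x) \<le> norm x"
    by (auto intro: power2_le_imp_le)
qed

lemma bounded_clinear_proj:
  assumes K: "closed_csubspace K"
  shows "bounded_clinear (proj K)"
  unfolding bounded_clinear_def
proof (intro conjI allI)
  have K': "subspace K"
    using K by (rule closed_csubspace_imp_subspace)
  fix x y
  show "proj K (x + y) = proj K x + proj K y"
  proof (rule proj_unique[OF K])
    show "proj K x + proj K y \<in> K"
      by (intro subspace_add K' proj_in K)
    have eq: "x + y - (proj K x + proj K y) = (x - proj K x) + (y - proj K y)"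
      by simp
    show "cinner (x + y - (proj K x + proj K y)) k = 0" if "k \<in> K" for k
      unfolding eq cinner_add_left using proj_orthogonal[OF K that] by simp
  qed
next
  fix a x
  show "proj K (a *\<^sub>C x) = a *\<^sub>C proj K x"
  proof (rule proj_unique[OF K])
    show "a *\<^sub>C proj K x \<in> K"
      by (intro closed_csubspace_scaleC K proj_in)
    show "cinner (a *\<^sub>C x - a *\<^sub>C proj K x) k = 0" if "k \<in> K" for k
      using proj_orthogonal[OF K that]
      by (simp add: scaleC_diff_right[symmetric] cinner_scaleC_left)
  qed
next
  show "\<exists>C. \<forall>x. norm (proj K x) \<le> norm x * C"
    using norm_proj_le[OF K] by (intro exI[of _ 1]) simp
qed

section \<open>Riesz representation and adjoints\<close>

lemma Riesz_representation:
  fixes \<phi> :: "'a::chilbert_space \<Rightarrow> complex"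
  assumes add: "\<And>x y. \<phi> (x + y) = \<phi> x + \<phi> y"
    and scale: "\<And>a x. \<phi> (a *\<^sub>C x) = a * \<phi> x"
    and bounded: "\<And>x. cmod (\<phi> x) \<le> norm x * K"
  shows "\<exists>z. \<forall>y. \<phi> y = cinner y z"
proof (cases "\<forall>y. \<phi> y = 0")
  case True
  then show ?thesis
    by (intro exI[of _ 0]) simp
next
  case False
  then obtain y0 where y0: "\<phi> y0 \<noteq> 0" by blast
  have "bounded_linear \<phi>"
    by (rule bounded_linear_intro[OF add _ bounded])
      (simp add: scaleR_scaleC scale scaleR_conv_of_real)
  then have "closed (\<phi> -` {0})"
    by (intro continuous_closed_vimage) (auto intro: linear_continuous_at)
  moreover have "\<phi> 0 = 0"
    using scale[of 0 0] by simp
  ultimately have N: "closed_csubspace (\<phi> -` {0})"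
    by (auto simp: closed_csubspace_def add scale)
  \<comment> \<open>\<open>w\<close> spans the orthogonal complement of the kernel\<close>
  define w where "w = y0 - proj (\<phi> -` {0}) y0"
  have "\<phi> (proj (\<phi> -` {0}) y0) = 0"
    using proj_in[OF N] by blast
  then have \<phi>w: "\<phi> w \<noteq> 0"
    using y0 add[of w "proj (\<phi> -` {0}) y0"] by (simp add: w_def)
  then have "w \<noteq> 0"
    using \<open>\<phi> 0 = 0\<close> by auto
  then have "cinner w w \<noteq> 0"
    by (simp add: cinner_eq_zero_iff)
  have cinner_w: "cinner y w = (\<phi> y / \<phi> w) * cinner w w" for y
  proof -
    define v where "v = y - (\<phi> y / \<phi> w) *\<^sub>C w"
    have "\<phi> y = \<phi> v + (\<phi> y / \<phi> w) * \<phi> w"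
      using add[of v "(\<phi> y / \<phi> w) *\<^sub>C w"] scale[of "\<phi> y / \<phi> w" w] by (simp add: v_def)
    then have "\<phi> v = 0"
      using \<phi>w by simp
    then have "cinner w v = 0"
      using proj_orthogonal[OF N, of v y0] by (simp add: w_def)
    then have "cinner v w = 0"
      by (metis cinner_conj complex_cnj_zero)
    then show ?thesis
      by (simp add: v_def cinner_diff_left cinner_scaleC_left)
  qed
  have "\<phi> y = cinner y ((cnj (\<phi> w) / cnj (cinner w w)) *\<^sub>C w)" for y
    using cinner_w[of y] \<phi>w \<open>cinner w w \<noteq> 0\<close> by (simp add: cinner_scaleC_right)
  then show ?thesis by blast
qed

lemma adjoint_exists:
  fixes T :: "'a::chilbert_space \<Rightarrow> 'a"
  assumes T: "bounded_clinear T"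
  shows "\<exists>S. \<forall>x y. cinner (S x) y = cinner x (T y)"
proof -
  obtain K where K: "\<And>x. norm (T x) \<le> norm x * K"
    using T by (auto simp: bounded_clinear_def)
  have "\<exists>z. \<forall>y. cinner (T y) x = cinner y z" for x
  proof (rule Riesz_representation[where K = "K * norm x"])
    show "cinner (T (a + b)) x = cinner (T a) x + cinner (T b) x" for a b
      using T by (simp add: bounded_clinear_def cinner_add_left)
    show "cinner (T (a *\<^sub>C b)) x = a * cinner (T b) x" for a b
      using T by (simp add: bounded_clinear_scaleC cinner_scaleC_left)
    show "cmod (cinner (T y) x) \<le> norm y * (K * norm x)" for y
    proof -
      have "cmod (cinner (T y) x) \<le> norm (T y) * norm x"
        by (rule norm_cinner_le)
      also have "\<dots> \<le> (norm y * K) * norm x"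
        using K[of y] by (simp add: mult_right_mono)
      finally show ?thesis
        by (simp add: mult.assoc)
    qed
  qed
  then have "\<forall>x. \<exists>z. \<forall>y. cinner (T y) x = cinner y z"
    by blast
  from choice[OF this] obtain S where S: "\<And>x y. cinner (T y) x = cinner y (S x)"
    by blast
  have "cinner (S x) y = cinner x (T y)" for x y
  proof -
    have "cinner (S x) y = cnj (cinner y (S x))"
      by (rule cinner_conj)
    also have "\<dots> = cinner x (T y)"
      by (simp add: S[symmetric] cinner_conj[of x "T y"])
    finally show ?thesis .
  qed
  then show ?thesis by blast
qed

lemma cinner_adj_left:
  fixes T :: "'a::chilbert_space \<Rightarrow> 'a"
  assumes "bounded_clinear T"
  shows "cinner (adj T x) y = cinner x (T y)"
proof -
  obtain S where S: "\<forall>x y. cinner (S x) y = cinner x (T y)"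
    using adjoint_exists[OF assms] by blast
  moreover have "S' = S" if "\<forall>x y. cinner (S' x) y = cinner x (T y)" for S'
    using that S by (intro ext cinner_left_ext) simp
  ultimately have "\<exists>!S. \<forall>x y. cinner (S x) y = cinner x (T y)"
    by blast
  from theI'[OF this] show ?thesis
    unfolding adj_def by blast
qed

section \<open>Open mapping theorem for operators restricted to a closed subspace\<close>

instance chilbert_space \<subseteq> banach ..

lemma Baire_closed_cover_contains_ball:
  fixes S :: "'a::complete_space set" and F :: "nat \<Rightarrow> 'a set"
  assumes S: "closed S" "S \<noteq> {}" and F: "\<And>n. closed (F n)" "\<And>n. F n \<subseteq> S"
    and cover: "S \<subseteq> (\<Union>n. F n)"
  shows "\<exists>n y r. r > 0 \<and> y \<in> S \<and> S \<inter> ball y r \<subseteq> F n"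
proof (rule ccontr)
  assume no_ball: "\<not> ?thesis"
  let ?X = "top_of_set S"
  have "completely_metrizable_space ?X"
    using S(1) closed_closedin completely_metrizable_space_closedin
      completely_metrizable_space_euclidean by blast
  moreover have "?X interior_of F n = {}" for n
    unfolding interior_of_eq_empty
  proof (intro allI impI)
    fix U
    assume U: "openin ?X U \<and> U \<subseteq> F n"
    then obtain V where V: "open V" "U = S \<inter> V"
      unfolding openin_open by blast
    show "U = {}"
    proof (rule ccontr)
      assume "U \<noteq> {}"
      then obtain y where "y \<in> U" by blast
      then obtain r where "r > 0" "ball y r \<subseteq> V"
        using V open_contains_ball by blast
      then show False
        using no_ball U V \<open>y \<in> U\<close> by blast
    qed
  qed
  moreover have "closedin ?X (F n)" for n
    using F closed_subset by blast
  ultimately have "?X interior_of \<Union>(range F) = {}"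
    by (intro Baire_category_alt) auto
  moreover have "\<Union>(range F) = S"
    using cover F(2) by blast
  ultimately show False
    using S(2) by (metis interior_of_topspace topspace_euclidean_subtopology)
qed

lemma convex_symmetric_contains_ball:
  fixes C :: "'a::real_normed_vector set"
  assumes "convex C" and "uminus ` C \<subseteq> C" and S: "subspace S"
    and "y \<in> S" and "S \<inter> ball y r \<subseteq> C" and "s \<in> S" and "norm s < r"
  shows "s \<in> C"
proof -
  have "y + s \<in> S" "y - s \<in> S"
    using assms(4,6) S by (auto intro: subspace_add subspace_diff)
  moreover have "y + s \<in> ball y r" "y - s \<in> ball y r"
    using \<open>norm s < r\<close> by (auto simp: dist_norm)
  ultimately have "y + s \<in> C" "y - s \<in> C"
    using assms(5) by auto
  moreover from this(2) have "- (y - s) \<in> C"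
    using \<open>uminus ` C \<subseteq> C\<close> by blast
  ultimately have "(1/2) *\<^sub>R (y + s) + (1/2) *\<^sub>R (- (y - s)) \<in> C"
    by (intro convexD[OF \<open>convex C\<close>]) auto
  moreover have "(1/2) *\<^sub>R (y + s) + (1/2) *\<^sub>R (- (y - s)) = (1/2) *\<^sub>R (2 *\<^sub>R s)"
    by (simp only: scaleR_add_right[symmetric]) (simp add: scaleR_2)
  ultimately show ?thesis by simp
qed

lemma closure_image_cball_contains_ball:
  fixes B :: "'a::chilbert_space \<Rightarrow> 'a"
  assumes B: "bounded_clinear B" and M: "closed_csubspace M" and closed: "closed (B ` M)"
  shows "\<exists>n r. r > 0 \<and> (\<forall>s\<in>B ` M. norm s < r \<longrightarrow> s \<in> closure (B ` (M \<inter> cball 0 (real n))))"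
proof -
  interpret B: bounded_linear B
    using B by (rule bounded_clinear_imp_bounded_linear)
  define S where "S = B ` M"
  have "subspace M"
    using M by (rule closed_csubspace_imp_subspace)
  have "subspace S"
    unfolding S_def by (rule closed_csubspace_imp_subspace[OF closed_csubspace_image[OF B M closed]])
  define F where "F n = closure (B ` (M \<inter> cball 0 (real n)))" for n
  have "\<exists>n y r. r > 0 \<and> y \<in> S \<and> S \<inter> ball y r \<subseteq> F n"
  proof (rule Baire_closed_cover_contains_ball)
    show "closed S" "S \<noteq> {}"
      using closed subspace_0[OF \<open>subspace S\<close>] by (auto simp: S_def)
    show "closed (F n)" for n
      by (simp add: F_def)
    show "F n \<subseteq> S" for n
      unfolding F_def S_def using closed by (intro closure_minimal) auto
    show "S \<subseteq> (\<Union>n. F n)"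
    proof
      fix s
      assume "s \<in> S"
      then obtain x where "x \<in> M" "s = B x"
        by (auto simp: S_def)
      moreover obtain n where "norm x \<le> real n"
        using real_arch_simple by blast
      ultimately have "s \<in> F n"
        unfolding F_def by (intro closure_subset[THEN subsetD]) auto
      then show "s \<in> (\<Union>n. F n)" by blast
    qed
  qed
  then obtain n y r where r: "r > 0" "y \<in> S" "S \<inter> ball y r \<subseteq> F n"
    by blast
  have "convex (F n)"
    unfolding F_def using \<open>subspace M\<close>
    by (intro convex_closure convex_linear_image convex_Int B.linear subspace_imp_convex convex_cball)
  have "uminus ` F n \<subseteq> closure (uminus ` B ` (M \<inter> cball 0 (real n)))"
    unfolding F_def
    by (rule closure_bounded_linear_image_subset[OF bounded_linear_minus[OF bounded_linear_ident]])
  also have "\<dots> \<subseteq> F n"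
    unfolding F_def using subspace_neg[OF \<open>subspace M\<close>]
    by (intro closure_mono) (auto simp flip: B.neg)
  finally have "uminus ` F n \<subseteq> F n" .
  have "s \<in> F n" if "s \<in> S" "norm s < r" for s
    by (rule convex_symmetric_contains_ball[OF \<open>convex (F n)\<close> \<open>uminus ` F n \<subseteq> F n\<close>
          \<open>subspace S\<close> r(2,3) that])
  then show ?thesis
    using r(1) unfolding S_def F_def by blast
qed

lemma approximate_bounded_lifting:
  fixes B :: "'a::chilbert_space \<Rightarrow> 'a"
  assumes B: "bounded_clinear B" and M: "closed_csubspace M" and closed: "closed (B ` M)"
  shows "\<exists>c\<ge>0. \<forall>s\<in>B ` M. \<forall>e>0. \<exists>x\<in>M. norm x \<le> c * norm s \<and> norm (s - B x) < e"
proof -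
  interpret B: bounded_linear B
    using B by (rule bounded_clinear_imp_bounded_linear)
  have "subspace M"
    using M by (rule closed_csubspace_imp_subspace)
  have "subspace (B ` M)"
    by (rule closed_csubspace_imp_subspace[OF closed_csubspace_image[OF B M closed]])
  obtain n r where "r > 0"
    and small: "\<And>s. s \<in> B ` M \<Longrightarrow> norm s < r \<Longrightarrow> s \<in> closure (B ` (M \<inter> cball 0 (real n)))"
    using closure_image_cball_contains_ball[OF assms] by blast
  define c where "c = 2 * real n / r"
  have "\<exists>x\<in>M. norm x \<le> c * norm s \<and> norm (s - B x) < e" if s: "s \<in> B ` M" and e: "e > 0" for s e
  proof (cases "s = 0")
    case True
    then show ?thesis
      using e subspace_0[OF \<open>subspace M\<close>] by (intro bexI[of _ 0]) auto
  next
    case False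
    \<comment> \<open>rescale \<open>s\<close> into the ball of radius \<open>r\<close>, approximate it there, and rescale back\<close>
    define t where "t = r / (2 * norm s)"
    have t: "t > 0"
      using False \<open>r > 0\<close> by (simp add: t_def)
    have "t *\<^sub>R s \<in> closure (B ` (M \<inter> cball 0 (real n)))"
      using t False \<open>r > 0\<close> s \<open>subspace (B ` M)\<close> by (intro small) (auto simp: t_def subspace_scale)
    then obtain z where z: "z \<in> B ` (M \<inter> cball 0 (real n))" "dist z (t *\<^sub>R s) < e * t"
      unfolding closure_approachable using e t by (meson mult_pos_pos)
    then obtain x where x: "x \<in> M" "norm x \<le> real n" "z = B x"
      by auto
    have "(1/t) *\<^sub>R x \<in> M"
      using \<open>subspace M\<close> x(1) by (rule subspace_scale)
    moreover have "norm ((1/t) *\<^sub>R x) \<le> c * norm s"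
    proof -
      have "norm ((1/t) *\<^sub>R x) \<le> real n / t"
        using x(2) t by (simp add: divide_right_mono)
      also have "\<dots> = c * norm s"
        using False \<open>r > 0\<close> by (simp add: t_def c_def field_simps)
      finally show ?thesis .
    qed
    moreover have "norm (s - B ((1/t) *\<^sub>R x)) < e"
    proof -
      have "s - B ((1/t) *\<^sub>R x) = (1/t) *\<^sub>R (t *\<^sub>R s - z)"
        using t by (simp add: B.scaleR x(3) algebra_simps)
      then have "norm (s - B ((1/t) *\<^sub>R x)) = norm (t *\<^sub>R s - z) / t"
        using t by simp
      also have "\<dots> < e"
        using z(2) t by (simp add: dist_norm norm_minus_commute field_simps)
      finally show ?thesis .
    qed
    ultimately show ?thesis by blast
  qed
  moreover have "c \<ge> 0"
    using \<open>r > 0\<close> by (simp add: c_def)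
  ultimately show ?thesis by blast
qed

lemma geometrically_bounded_series:
  fixes x :: "nat \<Rightarrow> 'a::banach"
  assumes bound: "\<And>k. norm (x k) \<le> C * (1/2) ^ k"
  shows "summable x" and "norm (suminf x) \<le> 2 * C"
proof -
  have geometric: "summable (\<lambda>k. C * (1/2::real) ^ k)"
    by (intro summable_mult summable_geometric) simp
  have summable_norm_x: "summable (\<lambda>k. norm (x k))"
    by (rule summable_comparison_test'[OF geometric, of 0]) (use bound in simp)
  then show "summable x"
    by (rule summable_norm_cancel)
  have "norm (suminf x) \<le> (\<Sum>k. norm (x k))"
    by (rule summable_norm[OF summable_norm_x])
  also have "\<dots> \<le> (\<Sum>k. C * (1/2::real) ^ k)"
    by (rule suminf_le[OF bound summable_norm_x geometric])
  also have "\<dots> = 2 * C"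
    using suminf_mult[of "\<lambda>k. (1/2::real) ^ k" C] suminf_geometric[of "1/2::real"] by simp
  finally show "norm (suminf x) \<le> 2 * C" .
qed

lemma suminf_in_closed_subspace:
  fixes x :: "nat \<Rightarrow> 'a::real_normed_vector"
  assumes M: "subspace M" "closed M" and "summable x" and x: "\<And>k. x k \<in> M"
  shows "suminf x \<in> M"
proof -
  have "(\<lambda>N. \<Sum>k<N. x k) \<longlonglongrightarrow> suminf x"
    using \<open>summable x\<close> by (rule summable_LIMSEQ)
  moreover have "(\<Sum>k<N. x k) \<in> M" for N
    using M(1) x by (rule subspace_sum)
  ultimately show ?thesis
    using M(2) closed_sequentially[of M "\<lambda>N. \<Sum>k<N. x k"] by blast
qed

lemma successive_corrections:
  fixes B :: "'a::real_normed_vector \<Rightarrow> 'b::real_normed_vector"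
  assumes B: "bounded_linear B" and M: "subspace M" and "c \<ge> 0"
    and halving: "\<And>s. s \<in> B ` M \<Longrightarrow> \<exists>x\<in>M. norm x \<le> c * norm s \<and> norm (s - B x) \<le> norm s / 2"
    and s: "s \<in> B ` M"
  obtains x where "\<And>k. x k \<in> M" and "\<And>k. norm (x k) \<le> c * norm s * (1/2) ^ k"
    and "\<And>N. norm ((\<Sum>k<N. B (x k)) - s) \<le> norm s * (1/2) ^ N"
proof -
  interpret B: bounded_linear B by (rule B)
  define f where "f s = (SOME x. x \<in> M \<and> norm x \<le> c * norm s \<and> norm (s - B x) \<le> norm s / 2)" for s
  have f: "f s \<in> M" "norm (f s) \<le> c * norm s" "norm (s - B (f s)) \<le> norm s / 2" if "s \<in> B ` M" for s
    using someI_ex[OF halving[OF that, unfolded Bex_def]] unfolding f_def by blast+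
  \<comment> \<open>\<open>\<sigma> k\<close> is the residual after \<open>k\<close> correction steps; it halves at every step\<close>
  define \<sigma> where "\<sigma> k = ((\<lambda>u. u - B (f u)) ^^ k) s" for k
  have \<sigma>_Suc: "\<sigma> (Suc k) = \<sigma> k - B (f (\<sigma> k))" for k
    by (simp add: \<sigma>_def)
  have \<sigma>_in: "\<sigma> k \<in> B ` M" for k
  proof (induction k)
    case 0
    then show ?case using s by (simp add: \<sigma>_def)
  next
    case (Suc k)
    then obtain m where "m \<in> M" "\<sigma> k = B m" by blast
    then have "\<sigma> (Suc k) = B (m - f (\<sigma> k))"
      by (simp add: \<sigma>_Suc B.diff)
    then show ?case
      using Suc f(1) \<open>m \<in> M\<close> subspace_diff[OF M] by blast
  qed
  have \<sigma>_norm: "norm (\<sigma> k) \<le> norm s * (1/2) ^ k" for k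
  proof (induction k)
    case 0
    then show ?case by (simp add: \<sigma>_def)
  next
    case (Suc k)
    then show ?case
      using f(3)[OF \<sigma>_in[of k]] by (simp add: \<sigma>_Suc)
  qed
  show thesis
  proof (rule that)
    show "f (\<sigma> k) \<in> M" for k
      using f(1)[OF \<sigma>_in] .
    show "norm (f (\<sigma> k)) \<le> c * norm s * (1/2) ^ k" for k
      using f(2)[OF \<sigma>_in[of k]] mult_left_mono[OF \<sigma>_norm[of k] \<open>c \<ge> 0\<close>] by (simp add: mult.assoc)
    have "(\<Sum>k<N. B (f (\<sigma> k))) = s - \<sigma> N" for N
      by (induction N) (simp_all add: \<sigma>_Suc, simp add: \<sigma>_def)
    then show "norm ((\<Sum>k<N. B (f (\<sigma> k))) - s) \<le> norm s * (1/2) ^ N" for N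
      using \<sigma>_norm[of N] by simp
  qed
qed

lemma lifting_of_halving_lifting:
  fixes B :: "'a::banach \<Rightarrow> 'b::real_normed_vector"
  assumes B: "bounded_linear B" and M: "subspace M" "closed M" and "c \<ge> 0"
    and halving: "\<And>s. s \<in> B ` M \<Longrightarrow> \<exists>x\<in>M. norm x \<le> c * norm s \<and> norm (s - B x) \<le> norm s / 2"
    and s: "s \<in> B ` M"
  shows "\<exists>x\<in>M. B x = s \<and> norm x \<le> 2 * c * norm s"
proof -
  interpret B: bounded_linear B by (rule B)
  obtain x where x_in: "\<And>k. x k \<in> M" and x_norm: "\<And>k. norm (x k) \<le> c * norm s * (1/2) ^ k"
    and residual: "\<And>N. norm ((\<Sum>k<N. B (x k)) - s) \<le> norm s * (1/2) ^ N"
    using successive_corrections[OF B M(1) \<open>c \<ge> 0\<close> halving s] by blast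
  note series = geometrically_bounded_series[OF x_norm]
  have "suminf x \<in> M"
    using M series(1) x_in by (rule suminf_in_closed_subspace)
  moreover have "(\<lambda>N. \<Sum>k<N. B (x k)) \<longlonglongrightarrow> s"
  proof (rule LIM_zero_cancel, rule Lim_null_comparison)
    show "\<forall>\<^sub>F N in sequentially. norm ((\<Sum>k<N. B (x k)) - s) \<le> norm s * (1/2) ^ N"
      using residual by simp
    show "(\<lambda>N. norm s * (1/2::real) ^ N) \<longlonglongrightarrow> 0"
      by (intro tendsto_mult_right_zero LIMSEQ_power_zero) simp
  qed
  then have "B (suminf x) = s"
    using B.sums[OF summable_sums[OF series(1)]] by (simp add: sums_def LIMSEQ_unique)
  moreover have "norm (suminf x) \<le> 2 * c * norm s"
    using series(2) by (simp add: mult.assoc)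
  ultimately show ?thesis by blast
qed

lemma bounded_lifting_onto_image:
  fixes B :: "'a::chilbert_space \<Rightarrow> 'a"
  assumes B: "bounded_clinear B" and M: "closed_csubspace M" and closed: "closed (B ` M)"
  shows "\<exists>C\<ge>0. \<forall>s\<in>B ` M. \<exists>x\<in>M. B x = s \<and> norm x \<le> C * norm s"
proof -
  obtain c where "c \<ge> 0"
    and approx: "\<And>s e. s \<in> B ` M \<Longrightarrow> e > 0 \<Longrightarrow> \<exists>x\<in>M. norm x \<le> c * norm s \<and> norm (s - B x) < e"
    using approximate_bounded_lifting[OF assms] by blast
  interpret B: bounded_linear B
    using B by (rule bounded_clinear_imp_bounded_linear)
  have "subspace M"
    using M by (rule closed_csubspace_imp_subspace)
  have halving: "\<exists>x\<in>M. norm x \<le> c * norm s \<and> norm (s - B x) \<le> norm s / 2" if "s \<in> B ` M" for s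
  proof (cases "s = 0")
    case True
    then show ?thesis
      using subspace_0[OF \<open>subspace M\<close>] by (intro bexI[of _ 0]) auto
  next
    case False
    then show ?thesis
      using approx[OF that, of "norm s / 2"] by force
  qed
  have "\<exists>x\<in>M. B x = s \<and> norm x \<le> 2 * c * norm s" if "s \<in> B ` M" for s
    by (rule lifting_of_halving_lifting[OF B.bounded_linear \<open>subspace M\<close> _
          \<open>c \<ge> 0\<close> halving that])
      (use M in \<open>simp add: closed_csubspace_def\<close>)
  then show ?thesis
    using \<open>c \<ge> 0\<close> by (intro exI[of _ "2 * c"]) auto
qed

lemma kernel_orthogonal_lift_clinear:
  assumes B: "bounded_clinear B" and M: "closed_csubspace M" and S: "closed_csubspace (B ` M)"
    and lift: "\<forall>s\<in>B ` M. L s \<in> M \<and> B (L s) = s"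
    and orthogonal: "\<forall>s. \<forall>k\<in>M \<inter> B -` {0}. cinner (L s) k = 0"
    and s: "s \<in> B ` M" and t: "t \<in> B ` M"
  shows "L (s + t) = L s + L t" and "L (a *\<^sub>C s) = a *\<^sub>C L s"
proof -
  interpret B: bounded_linear B
    using B by (rule bounded_clinear_imp_bounded_linear)
  have unique: "u = v" if "u \<in> M" "v \<in> M" "B u = B v"
    and "\<And>k. k \<in> M \<inter> B -` {0} \<Longrightarrow> cinner u k = 0" "\<And>k. k \<in> M \<inter> B -` {0} \<Longrightarrow> cinner v k = 0"
    for u v
  proof -
    have "u - v \<in> M \<inter> B -` {0}"
      using that(1-3) subspace_diff[OF closed_csubspace_imp_subspace[OF M]] by (simp add: B.diff)
    then have "cinner (u - v) (u - v) = 0"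
      using that(4,5) by (simp add: cinner_diff_left)
    then show ?thesis
      by (simp add: cinner_eq_zero_iff)
  qed
  have M': "subspace M" and S': "subspace (B ` M)"
    using M S by (simp_all add: closed_csubspace_imp_subspace)
  have "s + t \<in> B ` M"
    using S' s t by (rule subspace_add)
  show "L (s + t) = L s + L t"
  proof (rule unique)
    show "L (s + t) \<in> M" "L s + L t \<in> M" "B (L (s + t)) = B (L s + L t)"
      using lift[rule_format, OF s] lift[rule_format, OF t] lift[rule_format, OF \<open>s + t \<in> B ` M\<close>]
        subspace_add[OF M']
      by (simp_all add: B.add)
    show "cinner (L (s + t)) k = 0" "cinner (L s + L t) k = 0" if "k \<in> M \<inter> B -` {0}" for k
      using orthogonal[rule_format, OF that] by (simp_all add: cinner_add_left)
  qed
  have "a *\<^sub>C s \<in> B ` M"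
    using S s by (rule closed_csubspace_scaleC)
  show "L (a *\<^sub>C s) = a *\<^sub>C L s"
  proof (rule unique)
    show "L (a *\<^sub>C s) \<in> M" "a *\<^sub>C L s \<in> M" "B (L (a *\<^sub>C s)) = B (a *\<^sub>C L s)"
      using lift[rule_format, OF s] lift[rule_format, OF \<open>a *\<^sub>C s \<in> B ` M\<close>] closed_csubspace_scaleC[OF M]
      by (simp_all add: bounded_clinear_scaleC[OF B])
    show "cinner (L (a *\<^sub>C s)) k = 0" "cinner (a *\<^sub>C L s) k = 0" if "k \<in> M \<inter> B -` {0}" for k
      using orthogonal[rule_format, OF that] by (simp_all add: cinner_scaleC_left)
  qed
qed

lemma bounded_clinear_right_inverse_on_image:
  fixes B :: "'a::chilbert_space \<Rightarrow> 'a"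
  assumes B: "bounded_clinear B" and M: "closed_csubspace M" and closed: "closed (B ` M)"
  shows "\<exists>L. bounded_clinear L \<and> range L \<subseteq> M \<and> (\<forall>s\<in>B ` M. B (L s) = s)"
proof -
  interpret B: bounded_linear B
    using B by (rule bounded_clinear_imp_bounded_linear)
  define S where "S = B ` M"
  have S: "closed_csubspace S"
    unfolding S_def using B M closed by (rule closed_csubspace_image)
  have "subspace M"
    using M by (rule closed_csubspace_imp_subspace)
  define K where "K = M \<inter> B -` {0}"
  have K: "closed_csubspace K"
    unfolding K_def using B M by (rule closed_csubspace_Int_kernel)
  obtain C where "C \<ge> 0" and lift: "\<And>s. s \<in> S \<Longrightarrow> \<exists>x\<in>M. B x = s \<and> norm x \<le> C * norm s"
    using bounded_lifting_onto_image[OF B M closed] unfolding S_def by blast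
  define R where "R s = (SOME x. x \<in> M \<and> B x = s \<and> norm x \<le> C * norm s)" for s
  define L0 where "L0 s = R s - proj K (R s)" for s
  have R: "R s \<in> M" "B (R s) = s" "norm (R s) \<le> C * norm s" if "s \<in> S" for s
    using someI_ex[OF lift[OF that, unfolded Bex_def]] unfolding R_def by blast+
  have L0: "L0 s \<in> M" "B (L0 s) = s" "norm (L0 s) \<le> C * norm s" if "s \<in> S" for s
    using R[OF that] proj_in[OF K, of "R s"] norm_diff_proj_le[OF K, of "R s"] subspace_diff[OF \<open>subspace M\<close>]
    by (auto simp: L0_def K_def B.diff)
  have L0_orthogonal: "cinner (L0 s) k = 0" if "k \<in> M \<inter> B -` {0}" for s k
    unfolding L0_def using proj_orthogonal[OF K] that by (simp add: K_def)
  have "\<forall>s\<in>B ` M. L0 s \<in> M \<and> B (L0 s) = s" "\<forall>s. \<forall>k\<in>M \<inter> B -` {0}. cinner (L0 s) k = 0"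
    using L0(1,2) L0_orthogonal by (simp_all add: S_def)
  note L0_clinear = kernel_orthogonal_lift_clinear[OF B M S[unfolded S_def] this]
  have L0_add: "L0 (s + t) = L0 s + L0 t" if "s \<in> S" "t \<in> S" for s t
    using that unfolding S_def by (rule L0_clinear(1))
  have L0_scaleC: "L0 (a *\<^sub>C s) = a *\<^sub>C L0 s" if "s \<in> S" for a s
    using that that unfolding S_def by (rule L0_clinear(2))
  define L where "L x = L0 (proj S x)" for x
  have "bounded_clinear L"
    unfolding bounded_clinear_def
  proof (intro conjI allI exI)
    show "L (x + y) = L x + L y" "L (a *\<^sub>C x) = a *\<^sub>C L x" for a x y
      using bounded_clinear_proj[OF S] proj_in[OF S]
      by (simp_all add: L_def bounded_clinear_def L0_add L0_scaleC)
    show "norm (L x) \<le> norm x * C" for x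
      using L0(3)[OF proj_in[OF S], of x] mult_left_mono[OF norm_proj_le[OF S] \<open>C \<ge> 0\<close>, of x]
      by (simp add: L_def mult.commute)
  qed
  moreover have "range L \<subseteq> M"
    using L0(1)[OF proj_in[OF S]] by (auto simp: L_def)
  moreover have "B (L s) = s" if "s \<in> S" for s
    using L0(2) that by (simp add: L_def proj_fixpoint[OF S])
  ultimately show ?thesis
    unfolding S_def by blast
qed

section \<open>\<open>A\<close>-inverses and compatibility\<close>

lemma A_inverse_residual_orthogonal:
  assumes A: "positive_op A" and S: "closed_csubspace (B ` M)"
    and G: "is_A_inverse_restricted A B M G" and t: "t \<in> B ` M"
  shows "cinner (A (y - B (G y))) t = 0"
proof (rule positive_op_minimizer_orthogonal[OF A])
  fix \<tau>
  have "B (G y) \<in> B ` M"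
    using G by (auto simp: is_A_inverse_restricted_def)
  then have "B (G y) + \<tau> *\<^sub>C t \<in> B ` M"
    using S t closed_csubspace_scaleC subspace_add[OF closed_csubspace_imp_subspace[OF S]] by blast
  then obtain x where "x \<in> M" "B (G y) + \<tau> *\<^sub>C t = B x"
    by auto
  then have "normA A (y - B (G y)) \<le> normA A (y - B x)"
    using G by (simp add: is_A_inverse_restricted_def)
  also have "y - B x = y - B (G y) - \<tau> *\<^sub>C t"
    by (simp add: diff_diff_eq flip: \<open>B (G y) + \<tau> *\<^sub>C t = B x\<close>)
  finally have "normA A (y - B (G y)) \<le> normA A (y - B (G y) - \<tau> *\<^sub>C t)" .
  then show "Re (cinner (A (y - B (G y))) (y - B (G y)))
      \<le> Re (cinner (A (y - B (G y) - \<tau> *\<^sub>C t)) (y - B (G y) - \<tau> *\<^sub>C t))"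
    by (simp add: normA_le_iff)
qed

lemma comp_eq_adj_comp_iff_cinner:
  fixes A Q :: "'a::chilbert_space \<Rightarrow> 'a"
  assumes "bounded_clinear Q"
  shows "A \<circ> Q = adj Q \<circ> A \<longleftrightarrow> (\<forall>x y. cinner (A (Q x)) y = cinner (A x) (Q y))"
proof
  assume "A \<circ> Q = adj Q \<circ> A"
  then show "\<forall>x y. cinner (A (Q x)) y = cinner (A x) (Q y)"
    by (metis assms cinner_adj_left comp_apply)
next
  assume "\<forall>x y. cinner (A (Q x)) y = cinner (A x) (Q y)"
  then have "adj Q (A x) = A (Q x)" for x
    by (intro cinner_left_ext) (simp add: cinner_adj_left[OF assms])
  then show "A \<circ> Q = adj Q \<circ> A"
    by auto
qed

lemma compatible_if_A_orthogonal_residuals: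
  fixes A P :: "'a::chilbert_space \<Rightarrow> 'a"
  assumes A: "positive_op A" and S: "closed_csubspace S" and P: "bounded_clinear P"
    and P_in: "\<And>y. P y \<in> S" and orthogonal: "\<And>y t. t \<in> S \<Longrightarrow> cinner (A (y - P y)) t = 0"
  shows "compatible A S"
proof -
  interpret A: bounded_linear A
    using positive_op_imp_bounded_clinear[OF A] by (rule bounded_clinear_imp_bounded_linear)
  interpret P: bounded_linear P
    using P by (rule bounded_clinear_imp_bounded_linear)
  have "subspace S"
    using S by (rule closed_csubspace_imp_subspace)
  have A_kernel: "A (s - P s) = 0" if "s \<in> S" for s
    using orthogonal[of "s - P s" s] that P_in subspace_diff[OF \<open>subspace S\<close>]
    by (intro positive_op_form_eq_zero_imp_zero[OF A]) simp
  have orthogonal': "cinner (A s) (y - P y) = 0" if "s \<in> S" for s y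
    using orthogonal[OF that, of y] positive_op_self_adjoint[OF A, of s "y - P y"]
    by (metis cinner_conj complex_cnj_zero)
  \<comment> \<open>correct \<open>P\<close> to an idempotent onto \<open>S\<close> without changing \<open>A \<circ> P\<close>\<close>
  define E where "E = proj S"
  define Q where "Q x = E x + P (x - E x)" for x
  have "bounded_clinear Q"
    unfolding Q_def E_def
    by (intro bounded_clinear_add bounded_clinear_proj[OF S] bounded_clinear_compose[OF P]
        bounded_clinear_sub bounded_clinear_ident)
  have Q_in: "Q x \<in> S" for x
    unfolding Q_def E_def using proj_in[OF S] P_in subspace_add[OF \<open>subspace S\<close>] by blast
  have Q_fix: "Q s = s" if "s \<in> S" for s
    using that by (simp add: Q_def E_def proj_fixpoint[OF S])
  have "Q \<circ> Q = Q"
    by (rule ext) (simp add: Q_fix Q_in)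
  moreover have "range Q = S"
    using Q_in Q_fix by (auto intro: range_eqI[of _ Q, OF Q_fix[symmetric]])
  moreover have AQ: "A (Q x) = A (P x)" for x
  proof -
    have "A (Q x) - A (P x) = A (E x - P (E x))"
      by (simp add: Q_def P.diff flip: A.diff)
    also have "\<dots> = 0"
      using A_kernel proj_in[OF S] by (simp add: E_def)
    finally show ?thesis by simp
  qed
  have "cinner (A (Q x)) y = cinner (A x) (Q y)" for x y
  proof -
    have "cinner (A (Q x)) y = cinner (A (P x)) (P y)"
      using orthogonal'[OF P_in[of x], of y] by (simp add: AQ cinner_diff_right)
    also have "\<dots> = cinner (A x) (P y)"
      using orthogonal[OF P_in[of y], of x] by (simp add: A.diff cinner_diff_left)
    also have "\<dots> = cinner (A x) (Q y)"
      using AQ[of y] positive_op_self_adjoint[OF A] by metis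
    finally show ?thesis .
  qed
  then have "A \<circ> Q = adj Q \<circ> A"
    by (simp add: comp_eq_adj_comp_iff_cinner[OF \<open>bounded_clinear Q\<close>])
  ultimately show ?thesis
    unfolding compatible_def using \<open>bounded_clinear Q\<close> by blast
qed

lemma A_inverse_imp_compatible:
  fixes A B :: "'a::chilbert_space \<Rightarrow> 'a"
  assumes A: "positive_op A" and B: "bounded_clinear B" and S: "closed_csubspace (B ` M)"
    and G: "is_A_inverse_restricted A B M G"
  shows "compatible A (B ` M)"
proof (rule compatible_if_A_orthogonal_residuals[OF A S])
  show "bounded_clinear (\<lambda>y. B (G y))"
    using B G by (simp add: is_A_inverse_restricted_def bounded_clinear_compose)
  show "B (G y) \<in> B ` M" for y
    using G by (auto simp: is_A_inverse_restricted_def)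
  show "cinner (A (y - B (G y))) t = 0" if "t \<in> B ` M" for y t
    using A S G that by (rule A_inverse_residual_orthogonal)
qed

lemma compatible_projection_residual_orthogonal:
  fixes A Q :: "'a::chilbert_space \<Rightarrow> 'a"
  assumes A: "bounded_clinear A" and Q: "bounded_clinear Q" "Q \<circ> Q = Q" "range Q = S"
    and AQ: "A \<circ> Q = adj Q \<circ> A" and t: "t \<in> S"
  shows "cinner (A (y - Q y)) t = 0"
proof -
  interpret A: bounded_linear A
    using A by (rule bounded_clinear_imp_bounded_linear)
  have "Q t = t"
    using t Q(2,3) by (metis comp_apply rangeE)
  have "cinner (A (Q y)) t = cinner (A y) t"
    using AQ \<open>Q t = t\<close> by (simp add: comp_eq_adj_comp_iff_cinner[OF Q(1)])
  then show ?thesis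
    by (simp add: A.diff cinner_diff_left)
qed

lemma compatible_imp_A_inverse:
  fixes A B :: "'a::chilbert_space \<Rightarrow> 'a"
  assumes A: "positive_op A" and B: "bounded_clinear B" and M: "closed_csubspace M"
    and closed: "closed (B ` M)" and "compatible A (B ` M)"
  shows "\<exists>G. is_A_inverse_restricted A B M G"
proof -
  obtain Q where Q: "bounded_clinear Q" "Q \<circ> Q = Q" "range Q = B ` M" and AQ: "A \<circ> Q = adj Q \<circ> A"
    using \<open>compatible A (B ` M)\<close> unfolding compatible_def by blast
  obtain L where L: "bounded_clinear L" "range L \<subseteq> M" "\<And>s. s \<in> B ` M \<Longrightarrow> B (L s) = s"
    using bounded_clinear_right_inverse_on_image[OF B M closed] by blast
  have BLQ: "B (L (Q y)) = Q y" for y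
    using L(3) Q(3) by blast
  have "normA A (y - B (L (Q y))) \<le> normA A (y - B x)" if "x \<in> M" for y x
  proof -
    have "B x - Q y \<in> B ` M"
      using that Q(3) subspace_diff[OF closed_csubspace_imp_subspace[OF
            closed_csubspace_image[OF B M closed]]] by blast
    with positive_op_imp_bounded_clinear[OF A] Q AQ
    have "cinner (A (y - Q y)) (B x - Q y) = 0"
      by (rule compatible_projection_residual_orthogonal)
    then have "normA A (y - Q y) \<le> normA A (y - Q y - (B x - Q y))"
      by (rule normA_le_of_orthogonal[OF A])
    then show ?thesis
      by (simp add: BLQ)
  qed
  moreover have "bounded_clinear (\<lambda>y. L (Q y))"
    using L(1) Q(1) by (rule bounded_clinear_compose)
  moreover have "range (\<lambda>y. L (Q y)) \<subseteq> M"
    using L(2) by auto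
  ultimately show ?thesis
    unfolding is_A_inverse_restricted_def by blast
qed

theorem mainTheorem15:
  fixes A B :: "'a::chilbert_space \<Rightarrow> 'a" and M :: "'a set"
  assumes "separable_space TYPE('a)"
    and "positive_op A"
    and "bounded_clinear B" and "closed (range B)"
    and "closed_csubspace M" and "closed (B ` M)"
  shows "(\<exists>G. is_A_inverse_restricted A B M G) \<longleftrightarrow> compatible A (B ` M)"
proof -
  have "closed_csubspace (B ` M)"
    using assms(3,5,6) by (rule closed_csubspace_image)
  then show ?thesis
    using A_inverse_imp_compatible compatible_imp_A_inverse assms(2,3,5,6) by blast
qed

end
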